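(* Let $A\in\mathbb{R}^{n\times n}$ be symmetric, let $\mathcal{D}$ be a distribution over matrices $S\in\mathbb{R}^{n\times\tau}$, and let $X_0 = AWA$ for some $W\in\mathbb{R}^{n\times n}$. Define iterates $$X_{k+1} = X_k + AS_k(S_k^\top A^2 S_k)^\dagger S_k^\top (A - A X_k A) S_k (S_k^\top A^2 S_k)^\dagger S_k^\top A,\qquad k\ge0,$$ with $S_0,S_1,\dots$ drawn independently from $\mathcal{D}$. For $S\sim\mathcal{D}$ let $Z\eqdef AS(S^\top A^2S)^\dagger S^\top A$, and let $$\rho \eqdef 1-\inf\Big\{\langle \mathbb{E}[ZRZ],R\rangle \;:\; R = AQA,\ Q\in\mathbb{R}^{n\times n},\ \|R\|^2=1\Big\}.$$ Then $\mathbb{E}\big[\|X_k - A^\dagger\|^2\big]\le \rho^k\,\|X_0-A^\dagger\|^2$.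
   Context: $A^\dagger$ is the Moore–Penrose pseudoinverse; $\langle X,Y\rangle=\mathrm{Tr}(X^\top Y)$ and $\|\cdot\|$ is the Frobenius norm. *)

theory Defs
  imports "HOL-Analysis.Analysis" "HOL-Probability.Probability"
begin

text \<open>Moore--Penrose pseudoinverse, defined by the four Penrose conditions
  (it exists and is unique for every real matrix).\<close>
definition pinv :: "real^'m^'n \<Rightarrow> real^'n^'m" where
  "pinv M = (THE B. M ** B ** M = M \<and> B ** M ** B = B \<and>
                    transpose (M ** B) = M ** B \<and> transpose (B ** M) = B ** M)"

definition Zmat :: "real^'n^'n \<Rightarrow> real^'t^'n \<Rightarrow> real^'n^'n" where
  "Zmat A S = A ** S ** pinv (transpose S ** A ** A ** S) ** transpose S ** A"

definition step :: "real^'n^'n \<Rightarrow> real^'t^'n \<Rightarrow> real^'n^'n \<Rightarrow> real^'n^'n" where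
  "step A S X = X + A ** S ** pinv (transpose S ** A ** A ** S) ** transpose S
      ** (A - A ** X ** A) ** S ** pinv (transpose S ** A ** A ** S) ** transpose S ** A"

fun iter :: "real^'n^'n \<Rightarrow> real^'n^'n \<Rightarrow> (nat \<Rightarrow> real^'t^'n) \<Rightarrow> nat \<Rightarrow> real^'n^'n" where
  "iter A X0 Ss 0 = X0"
| "iter A X0 Ss (Suc k) = step A (Ss k) (iter A X0 Ss k)"

end

theory Submission
  imports Defs
begin

text \<open>The error \<open>E\<^sub>k = X\<^sub>k - A\<^sup>\<dagger>\<close> satisfies \<open>E\<^sub>k\<^sub>+\<^sub>1 = E\<^sub>k - Z E\<^sub>k Z\<close> with \<open>Z = Z(S\<^sub>k)\<close>
  a symmetric idempotent, and it stays in the space \<open>{A Q A}\<close>. For a projection \<open>Z\<close> one has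
  \<open>\<parallel>E - Z E Z\<parallel>\<^sup>2 = \<parallel>E\<parallel>\<^sup>2 - \<langle>Z E Z, E\<rangle>\<close>, so averaging over the fresh sketch \<open>S\<^sub>k\<close> and using the
  definition of \<open>\<rho>\<close> contracts \<open>\<parallel>E\<^sub>k\<parallel>\<^sup>2\<close> by the factor \<open>\<rho>\<close>; Fubini on the product measure turns
  this into the bound on \<open>\<bbbE> \<parallel>E\<^sub>k\<parallel>\<^sup>2\<close>. If some \<open>Z R Z\<close> is not integrable, its Bochner integral is \<open>0\<close>,
  which forces \<open>\<rho> \<ge> 1\<close>, and the bound follows from \<open>\<parallel>E\<^sub>k\<parallel>\<close> being non-increasing.\<close>

lemma matrix_diff_ldistrib: "(A::'a::ring_1^'n^'m) ** (B - C) = A ** B - A ** C"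
  by (vector matrix_matrix_mult_def sum_subtractf right_diff_distrib)

lemma matrix_diff_rdistrib: "((B::'a::ring_1^'n^'m) - C) ** A = B ** A - C ** A"
  by (vector matrix_matrix_mult_def sum_subtractf left_diff_distrib)

lemma matrix_add_rdistrib: "((B::'a::semiring_1^'n^'m) + C) ** A = B ** A + C ** A"
  by (vector matrix_matrix_mult_def sum.distrib distrib_right)

lemma inner_matrix_eq_trace: "(X::real^'n^'m) \<bullet> Y = trace (transpose X ** Y)"
  by (simp add: inner_vec_def trace_def matrix_matrix_mult_def transpose_def)
     (rule sum.swap)

lemma inner_matrix_mul_left: "((X::real^'n^'m) ** Y) \<bullet> W = Y \<bullet> (transpose X ** W)"
  by (simp add: inner_matrix_eq_trace matrix_transpose_mul matrix_mul_assoc)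

lemma inner_matrix_mul_right: "((Y::real^'n^'m) ** X) \<bullet> W = Y \<bullet> (W ** transpose X)"
  by (metis inner_matrix_eq_trace matrix_transpose_mul matrix_mul_assoc trace_mul_sym)

definition moore_penrose :: "real^'m^'n \<Rightarrow> real^'n^'m \<Rightarrow> bool" where
  "moore_penrose M B \<longleftrightarrow> M ** B ** M = M \<and> B ** M ** B = B \<and>
     transpose (M ** B) = M ** B \<and> transpose (B ** M) = B ** M"

lemma moore_penrose_unique:
  assumes "moore_penrose M B1" and "moore_penrose M B2" shows "B1 = B2"
proof -
  have 1: "M ** B1 ** M = M" "B1 ** M ** B1 = B1" "transpose (M ** B1) = M ** B1"
     "transpose (B1 ** M) = B1 ** M" using assms(1) by (auto simp: moore_penrose_def)
  have 2: "M ** B2 ** M = M" "B2 ** M ** B2 = B2" "transpose (M ** B2) = M ** B2"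
     "transpose (B2 ** M) = B2 ** M" using assms(2) by (auto simp: moore_penrose_def)
  have "B1 = B1 ** transpose (M ** B1)" using 1 by (simp add: matrix_mul_assoc)
  also have "\<dots> = B1 ** transpose (M ** B2 ** M ** B1)" using 2 by simp
  also have "\<dots> = B1 ** transpose (M ** B1) ** transpose (M ** B2)"
    by (simp add: matrix_transpose_mul matrix_mul_assoc)
  also have "\<dots> = B1 ** M ** B2" using 1 2 by (simp add: matrix_mul_assoc)
  finally have e1: "B1 = B1 ** M ** B2" .
  have "B2 = transpose (B2 ** M) ** B2" using 2 by simp
  also have "\<dots> = transpose (B2 ** (M ** B1 ** M)) ** B2" using 1 by simp
  also have "\<dots> = transpose (B1 ** M) ** transpose (B2 ** M) ** B2"
    by (simp add: matrix_transpose_mul matrix_mul_assoc)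
  also have "\<dots> = B1 ** M ** (B2 ** M ** B2)" by (simp only: 1(4) 2(4) matrix_mul_assoc)
  also have "\<dots> = B1 ** M ** B2" using 2 by simp
  finally show ?thesis using e1 by simp
qed

lemma pinv_eqI: "moore_penrose M B \<Longrightarrow> pinv M = B"
  unfolding pinv_def
  by (rule the_equality) (auto simp: moore_penrose_def[symmetric] moore_penrose_unique)

lemma moore_penrose_transpose:
  "moore_penrose M B \<Longrightarrow> moore_penrose (transpose M) (transpose B)"
  unfolding moore_penrose_def
  by (metis matrix_transpose_mul matrix_mul_assoc transpose_transpose)

lemma orthogonal_projection_matrix_exists:
  fixes V :: "(real^'n) set"
  assumes "subspace V"
  obtains P :: "real^'n^'n"
  where "transpose P = P" "\<And>x. P *v x \<in> V" "\<And>y. y \<in> V \<Longrightarrow> P *v y = y"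
proof -
  obtain B where B: "B \<subseteq> V" "pairwise orthogonal B" "\<And>x. x \<in> B \<Longrightarrow> norm x = 1"
    "independent B" "span B = V"
    using orthonormal_basis_subspace[OF assms] by metis
  have fin: "finite B" using B(4) by (rule independent_imp_finite)
  define P :: "real^'n^'n" where "P = (\<chi> i j. \<Sum>u\<in>B. u$i * u$j)"
  have Pv: "P *v x = (\<Sum>u\<in>B. (u \<bullet> x) *\<^sub>R u)" for x
    by (simp add: P_def vec_eq_iff matrix_vector_mult_def inner_vec_def sum_distrib_left
        sum_distrib_right mult_ac) (intro allI sum.swap)
  have P_range: "P *v x \<in> V" for x
    unfolding Pv B(5)[symmetric] by (intro span_sum span_mul span_base)
  have "P *v y = y" if "y \<in> V" for y
  proof -
    have "y \<in> span B" using that B(5) by simp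
    then show ?thesis
    proof (induction rule: span_induct_alt)
      case base then show ?case by simp
    next
      case (step c u y)
      have "P *v u = u"
      proof -
        have "(\<Sum>v\<in>B. (v \<bullet> u) *\<^sub>R v) = (u \<bullet> u) *\<^sub>R u + (\<Sum>v\<in>B - {u}. (v \<bullet> u) *\<^sub>R v)"
          using fin step(1) by (simp add: sum.remove)
        also have "(\<Sum>v\<in>B - {u}. (v \<bullet> u) *\<^sub>R v) = 0"
          using B(2) step(1) by (intro sum.neutral) (auto simp: pairwise_def orthogonal_def inner_commute)
        finally show ?thesis using B(3)[OF step(1)] by (simp add: Pv norm_eq_1)
      qed
      then show ?case
        using step(2) by (simp add: matrix_vector_right_distrib matrix_vector_mult_scaleR)
    qed
  qed
  moreover have "transpose P = P"
    by (simp add: P_def transpose_def vec_eq_iff mult.commute)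
  ultimately show ?thesis using that P_range by blast
qed

lemma moore_penrose_exists_symmetric:
  fixes M :: "real^'n^'n"
  assumes sym: "transpose M = M"
  shows "\<exists>B. moore_penrose M B"
proof -
  obtain P :: "real^'n^'n" where Psym: "transpose P = P"
    and Prange: "\<And>x. P *v x \<in> range ((*v) M)"
    and Pfix: "\<And>y. y \<in> range ((*v) M) \<Longrightarrow> P *v y = y"
    using orthogonal_projection_matrix_exists[of "range ((*v) M)"]
    by (metis linear_subspace_image matrix_vector_mul_linear subspace_UNIV)
  have PP: "P ** P = P" and PM: "P ** M = M"
    by (simp_all add: matrix_eq matrix_vector_mul_assoc[symmetric] Pfix Prange)
  have MP: "M ** P = M"
    by (metis PM Psym sym matrix_transpose_mul)
  \<comment> \<open>N acts as M on the range of M and as the identity on its kernel, so it is invertible.\<close>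
  define N where "N = M + mat 1 - P"
  have PN: "P ** N = M" and NP: "N ** P = M"
    by (simp_all add: N_def matrix_diff_ldistrib matrix_add_ldistrib matrix_diff_rdistrib
        matrix_add_rdistrib PM MP PP)
  have "x = 0" if Nx: "N *v x = 0" for x
  proof -
    have Mx: "M *v x = 0"
      by (metis PN Nx matrix_vector_mul_assoc matrix_vector_mult_0_right)
    then have "x = P *v x" using Nx by (simp add: N_def algebra_simps)
    then obtain y where y: "x = M *v y" using Prange[of x] by auto
    have "x \<bullet> x = y \<bullet> (M *v x)"
      by (metis y sym dot_lmul_matrix transpose_matrix_vector)
    then show ?thesis using Mx by simp
  qed
  then obtain K where KN: "K ** N = mat 1"
    using matrix_left_invertible_ker by blast
  then have NK: "N ** K = mat 1" by (rule matrix_left_right_inverse[THEN iffD1])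
  have KM: "K ** M = P" by (metis NP KN matrix_mul_assoc matrix_mul_lid)
  have MK: "M ** K = P" by (metis PN NK matrix_mul_assoc matrix_mul_rid)
  have "moore_penrose M (K ** P)"
    unfolding moore_penrose_def
    by (metis MK KM PM PP Psym matrix_mul_assoc)
  then show ?thesis by blast
qed

lemma moore_penrose_pinv_symmetric:
  "transpose M = M \<Longrightarrow> moore_penrose M (pinv M)"
  using moore_penrose_exists_symmetric pinv_eqI by blast

lemma pinv_symmetric:
  assumes "transpose M = M" shows "transpose (pinv M) = pinv M"
  using moore_penrose_transpose[OF moore_penrose_pinv_symmetric[OF assms]] assms
    moore_penrose_pinv_symmetric[OF assms] moore_penrose_unique by metis

lemma pinv_commute_symmetric:
  assumes "transpose M = M" shows "M ** pinv M = pinv M ** M"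
  using moore_penrose_pinv_symmetric[OF assms] pinv_symmetric[OF assms] assms
  unfolding moore_penrose_def by (metis matrix_transpose_mul)

lemma pinv_sandwich_symmetric:
  assumes "transpose M = M" shows "pinv M = M ** (pinv M ** pinv M ** pinv M) ** M"
proof -
  let ?B = "pinv M"
  have MBM: "M ** ?B ** M = M" and BMB: "?B ** M ** ?B = ?B"
    using moore_penrose_pinv_symmetric[OF assms] by (auto simp: moore_penrose_def)
  have "M ** (?B ** ?B ** ?B) ** M = (M ** ?B) ** ?B ** (?B ** M)"
    by (simp only: matrix_mul_assoc)
  also have "\<dots> = (?B ** M) ** ?B ** (M ** ?B)"
    by (simp only: pinv_commute_symmetric[OF assms])
  also have "\<dots> = ?B ** (M ** ?B ** M) ** ?B"
    by (simp only: matrix_mul_assoc)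
  finally show ?thesis by (simp add: MBM BMB)
qed

lemma Zmat_symmetric_idempotent:
  fixes A :: "real^'n^'n" and S :: "real^'t^'n"
  assumes "transpose A = A"
  shows "transpose (Zmat A S) = Zmat A S" and "Zmat A S ** Zmat A S = Zmat A S"
proof -
  define C where "C = A ** S"
  define G where "G = transpose C ** C"
  have Gsym: "transpose G = G" by (simp add: G_def matrix_transpose_mul)
  have Z: "Zmat A S = C ** pinv G ** transpose C"
    using assms by (simp add: Zmat_def C_def G_def matrix_transpose_mul matrix_mul_assoc)
  show "transpose (Zmat A S) = Zmat A S"
    by (simp add: Z matrix_transpose_mul pinv_symmetric[OF Gsym] matrix_mul_assoc)
  have "Zmat A S ** Zmat A S = C ** (pinv G ** G ** pinv G) ** transpose C"
    by (simp add: Z G_def matrix_mul_assoc)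
  also have "pinv G ** G ** pinv G = pinv G"
    using moore_penrose_pinv_symmetric[OF Gsym] by (simp add: moore_penrose_def)
  finally show "Zmat A S ** Zmat A S = Zmat A S" by (simp add: Z)
qed

lemma linear_matrix_sandwich: "linear (\<lambda>Q::real^'n^'m. A ** Q ** (B::real^'p^'n))"
  by (rule linearI)
     (simp_all add: matrix_add_ldistrib matrix_add_rdistrib matrix_scalar_ac scalar_matrix_assoc)

definition sandwich_space :: "real^'n^'n \<Rightarrow> (real^'n^'n) set" where
  "sandwich_space A = range (\<lambda>Q. A ** Q ** A)"

lemma subspace_sandwich_space: "subspace (sandwich_space A)"
  unfolding sandwich_space_def
  by (intro linear_subspace_image linear_matrix_sandwich subspace_UNIV)

lemma pinv_in_sandwich_space: "transpose A = A \<Longrightarrow> pinv A \<in> sandwich_space A"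
  unfolding sandwich_space_def by (subst pinv_sandwich_symmetric) auto

lemma Zmat_compression_in_sandwich_space: "Zmat A S ** X ** Zmat A S \<in> sandwich_space A"
proof -
  have "Zmat A S ** X ** Zmat A S = A ** (S ** pinv (transpose S ** A ** A ** S) ** transpose S
      ** A ** X ** A ** S ** pinv (transpose S ** A ** A ** S) ** transpose S) ** A"
    by (simp add: Zmat_def matrix_mul_assoc)
  then show ?thesis unfolding sandwich_space_def by blast
qed

lemma inner_compression_eq_norm:
  fixes Z R :: "real^'n^'n"
  assumes "transpose Z = Z" "Z ** Z = Z"
  shows "(Z ** R ** Z) \<bullet> R = (norm (Z ** R ** Z))\<^sup>2"
proof -
  have "(Z ** R ** Z) \<bullet> (Z ** R ** Z) = (Z ** R) \<bullet> (Z ** R ** Z ** Z)"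
    by (simp add: inner_matrix_mul_right assms(1))
  also have "\<dots> = (Z ** R) \<bullet> (Z ** R ** Z)" by (metis assms(2) matrix_mul_assoc)
  also have "\<dots> = R \<bullet> (Z ** (Z ** R ** Z))" by (simp add: inner_matrix_mul_left assms(1))
  also have "\<dots> = R \<bullet> (Z ** R ** Z)" by (simp add: matrix_mul_assoc assms(2))
  finally show ?thesis by (simp add: inner_commute power2_norm_eq_inner)
qed

lemma norm_sub_compression:
  fixes Z R :: "real^'n^'n"
  assumes "transpose Z = Z" "Z ** Z = Z"
  shows "(norm (R - Z ** R ** Z))\<^sup>2 = (norm R)\<^sup>2 - (Z ** R ** Z) \<bullet> R"
  using inner_compression_eq_norm[OF assms, of R]
  by (simp add: power2_norm_eq_inner inner_diff inner_commute)

lemma step_minus_pinv: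
  fixes A X :: "real^'n^'n"
  assumes "transpose A = A"
  shows "step A S X - pinv A = (X - pinv A) - Zmat A S ** (X - pinv A) ** Zmat A S"
proof -
  have "A - A ** X ** A = A ** (pinv A - X) ** A"
    using moore_penrose_pinv_symmetric[OF assms]
    by (simp add: matrix_diff_ldistrib matrix_diff_rdistrib moore_penrose_def)
  then have "step A S X = X + Zmat A S ** (pinv A - X) ** Zmat A S"
    by (simp add: step_def Zmat_def matrix_mul_assoc)
  then show ?thesis by (simp add: matrix_diff_ldistrib matrix_diff_rdistrib algebra_simps)
qed

lemma iter_cong: "(\<And>j. j < k \<Longrightarrow> Ss j = Ss' j) \<Longrightarrow> iter A X0 Ss k = iter A X0 Ss' k"
  by (induction k) auto

lemma iter_minus_pinv_in_sandwich_space: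
  assumes "transpose A = A" "X0 \<in> sandwich_space A"
  shows "iter A X0 Ss k - pinv A \<in> sandwich_space A"
proof (induction k)
  case 0 then show ?case
    by (simp add: subspace_diff[OF subspace_sandwich_space] assms pinv_in_sandwich_space)
next
  case (Suc k) then show ?case
    by (simp add: step_minus_pinv[OF assms(1)] subspace_diff[OF subspace_sandwich_space]
        Zmat_compression_in_sandwich_space)
qed

lemma norm_iter_minus_pinv_le:
  assumes "transpose A = A"
  shows "(norm (iter A X0 Ss k - pinv A))\<^sup>2 \<le> (norm (X0 - pinv A))\<^sup>2"
proof (induction k)
  case (Suc k)
  let ?E = "iter A X0 Ss k - pinv A" and ?Z = "Zmat A (Ss k)"
  have "(norm (iter A X0 Ss (Suc k) - pinv A))\<^sup>2 = (norm ?E)\<^sup>2 - (?Z ** ?E ** ?Z) \<bullet> ?E"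
    by (simp only: iter.simps step_minus_pinv[OF assms]
        norm_sub_compression[OF Zmat_symmetric_idempotent[OF assms]])
  also have "\<dots> \<le> (norm ?E)\<^sup>2"
    by (simp add: inner_compression_eq_norm[OF Zmat_symmetric_idempotent[OF assms]])
  finally show ?case using Suc by simp
qed simp

lemma (in prob_space) integral_PiM_iterated_contraction:
  fixes g :: "nat \<Rightarrow> (nat \<Rightarrow> 'a) \<Rightarrow> real"
  assumes integrable: "\<And>k. integrable (PiM {..<k} (\<lambda>_. M)) (g k)"
    and nonneg: "\<And>k x. 0 \<le> g k x"
    and init: "\<And>x. g 0 x = c"
    and contraction: "\<And>k x. (\<integral>y. g (Suc k) (x(k := y)) \<partial>M) \<le> \<rho> * g k x"
    and "0 \<le> \<rho>"
  shows "(\<integral>x. g k x \<partial>PiM {..<k} (\<lambda>_. M)) \<le> \<rho> ^ k * c"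
proof (induction k)
  case 0
  interpret P0: prob_space "PiM {} (\<lambda>_. M)"
    by (intro prob_space_PiM prob_space_axioms)
  show ?case by (simp add: init P0.prob_space)
next
  case (Suc k)
  interpret product_sigma_finite "\<lambda>_::nat. M"
    by (simp add: product_sigma_finite_def sigma_finite_measure_axioms)
  have "(\<integral>x. g (Suc k) x \<partial>PiM {..<Suc k} (\<lambda>_. M))
      = (\<integral>x. (\<integral>y. g (Suc k) (x(k := y)) \<partial>M) \<partial>PiM {..<k} (\<lambda>_. M))"
    using integrable[of "Suc k"] lessThan_Suc[of k]
    by (simp add: product_integral_insert)
  also have "\<dots> \<le> (\<integral>x. \<rho> * g k x \<partial>PiM {..<k} (\<lambda>_. M))"
    using integrable[of k] contraction nonneg \<open>0 \<le> \<rho>\<close> by (intro integral_mono') simp_all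
  also have "\<dots> \<le> \<rho> * (\<rho> ^ k * c)"
    using Suc.IH \<open>0 \<le> \<rho>\<close> by (simp add: mult_left_mono)
  finally show ?case by simp
qed

lemma borel_measurable_linear_family:
  fixes L :: "'a \<Rightarrow> 'b::euclidean_space \<Rightarrow> 'c::euclidean_space"
  assumes "\<And>S. linear (L S)" and "\<And>b. b \<in> Basis \<Longrightarrow> (\<lambda>S. L S b) \<in> borel_measurable M"
    and "f \<in> borel_measurable N" and "g \<in> measurable N M"
  shows "(\<lambda>x. L (g x) (f x)) \<in> borel_measurable N"
proof -
  have "L (g x) (f x) = (\<Sum>b\<in>Basis. (f x \<bullet> b) *\<^sub>R L (g x) b)" for x
    by (subst euclidean_representation[symmetric, of "f x"])
       (simp add: linear_sum[OF assms(1)] linear_scale[OF assms(1)])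
  moreover have "(\<lambda>x. \<Sum>b\<in>Basis. (f x \<bullet> b) *\<^sub>R L (g x) b) \<in> borel_measurable N"
  proof (intro borel_measurable_sum borel_measurable_scaleR)
    fix b :: 'b assume "b \<in> Basis"
    show "(\<lambda>x. f x \<bullet> b) \<in> borel_measurable N"
      using assms(3) by (intro borel_measurable_inner borel_measurable_const)
    show "(\<lambda>x. L (g x) b) \<in> borel_measurable N"
      using measurable_compose[OF assms(4) assms(2)[OF \<open>b \<in> Basis\<close>]] .
  qed
  ultimately show ?thesis by simp
qed

lemma sandwich_space_pinv_retract:
  assumes "transpose A = A" "X \<in> sandwich_space A"
  shows "A ** (pinv A ** X ** pinv A) ** A = X"
proof -
  have AA: "A ** pinv A ** A = A"
    using moore_penrose_pinv_symmetric[OF assms(1)] by (simp add: moore_penrose_def)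
  obtain Q where "X = A ** Q ** A" using assms(2) by (auto simp: sandwich_space_def)
  then have "A ** (pinv A ** X ** pinv A) ** A = (A ** pinv A ** A) ** Q ** (A ** pinv A ** A)"
    by (simp only: matrix_mul_assoc)
  then show ?thesis using \<open>X = A ** Q ** A\<close> by (simp only: AA)
qed

lemma borel_measurable_iter:
  fixes D :: "(real^'t^'n) measure" and A X0 :: "real^'n^'n"
  assumes sym: "transpose A = A" and X0: "X0 \<in> sandwich_space A"
    and meas: "\<And>X. X \<in> sandwich_space A \<Longrightarrow>
                 (\<lambda>S. Zmat A S ** X ** Zmat A S) \<in> borel_measurable D"
    and "k \<le> m"
  shows "(\<lambda>Ss. iter A X0 Ss k - pinv A) \<in> borel_measurable (PiM {..<m} (\<lambda>_. D))"
  using \<open>k \<le> m\<close>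
proof (induction k)
  case (Suc k)
  let ?E = "\<lambda>Ss. iter A X0 Ss k - pinv A"
  let ?L = "\<lambda>S Y. Zmat A S ** (A ** Y ** A) ** Zmat A S"
  have IH: "?E \<in> borel_measurable (PiM {..<m} (\<lambda>_. D))"
    using Suc by simp
  have "(\<lambda>Y. pinv A ** Y ** pinv A) \<in> borel_measurable borel"
    by (intro borel_measurable_continuous_onI linear_continuous_on
        linear_conv_bounded_linear[THEN iffD1] linear_matrix_sandwich)
  then have L_meas:
    "(\<lambda>Ss. ?L (Ss k) (pinv A ** ?E Ss ** pinv A)) \<in> borel_measurable (PiM {..<m} (\<lambda>_. D))"
  proof (intro borel_measurable_linear_family[where L = ?L and g = "\<lambda>Ss. Ss k"]
      measurable_compose[OF IH])
    show "linear (?L S)" for S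
      using linear_compose[OF linear_matrix_sandwich[of A A]
          linear_matrix_sandwich[of "Zmat A S" "Zmat A S"]]
      by (simp add: o_def)
    show "(\<lambda>S. ?L S b) \<in> borel_measurable D" for b
      by (intro meas) (auto simp: sandwich_space_def)
    show "(\<lambda>Ss. Ss k) \<in> measurable (PiM {..<m} (\<lambda>_. D)) D"
      using Suc by (intro measurable_component_singleton) simp
  qed
  have L_eq: "(\<lambda>Ss. ?L (Ss k) (pinv A ** ?E Ss ** pinv A))
      = (\<lambda>Ss. Zmat A (Ss k) ** ?E Ss ** Zmat A (Ss k))"
    by (simp only: sandwich_space_pinv_retract[OF sym iter_minus_pinv_in_sandwich_space[OF sym X0]])
  show ?case
    unfolding iter.simps step_minus_pinv[OF sym]
    by (rule borel_measurable_diff[OF IH]) (use L_meas in \<open>simp only: L_eq\<close>)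
qed simp

definition contraction_rate :: "(real^'t^'n) measure \<Rightarrow> real^'n^'n \<Rightarrow> real" where
  "contraction_rate D A = 1 - Inf {(integral\<^sup>L D (\<lambda>S. Zmat A S ** R ** Zmat A S)) \<bullet> R | R Q.
                                   R = A ** Q ** A \<and> (norm R)\<^sup>2 = 1}"

lemma expected_compression_inner_nonneg:
  assumes "transpose A = A"
  shows "0 \<le> (integral\<^sup>L D (\<lambda>S. Zmat A S ** R ** Zmat A S)) \<bullet> R"
proof (cases "integrable D (\<lambda>S. Zmat A S ** R ** Zmat A S)")
  case True
  then have "(integral\<^sup>L D (\<lambda>S. Zmat A S ** R ** Zmat A S)) \<bullet> R
      = (\<integral>S. (Zmat A S ** R ** Zmat A S) \<bullet> R \<partial>D)" by simp
  also have "\<dots> \<ge> 0"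
    by (intro Bochner_Integration.integral_nonneg)
       (simp add: inner_compression_eq_norm[OF Zmat_symmetric_idempotent[OF assms]])
  finally show ?thesis .
qed (simp add: not_integrable_integral_eq)

lemma contraction_rate_bound:
  assumes sym: "transpose A = A" and X: "X \<in> sandwich_space A"
  shows "(1 - contraction_rate D A) * (norm X)\<^sup>2
           \<le> (integral\<^sup>L D (\<lambda>S. Zmat A S ** X ** Zmat A S)) \<bullet> X"
proof (cases "X = 0")
  case False
  let ?T = "{(integral\<^sup>L D (\<lambda>S. Zmat A S ** R ** Zmat A S)) \<bullet> R | R Q.
              R = A ** Q ** A \<and> (norm R)\<^sup>2 = 1}"
  let ?u = "X /\<^sub>R norm X"
  have "?u \<in> sandwich_space A"
    by (rule subspace_scale[OF subspace_sandwich_space X])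
  then obtain Q where "?u = A ** Q ** A" by (auto simp: sandwich_space_def)
  moreover have "(norm ?u)\<^sup>2 = 1" using False by simp
  ultimately have "(integral\<^sup>L D (\<lambda>S. Zmat A S ** ?u ** Zmat A S)) \<bullet> ?u \<in> ?T"
    by blast
  moreover have "bdd_below ?T"
    using expected_compression_inner_nonneg[OF sym] by (auto intro!: bdd_belowI[where m=0])
  ultimately have "Inf ?T \<le> (integral\<^sup>L D (\<lambda>S. Zmat A S ** ?u ** Zmat A S)) \<bullet> ?u"
    by (rule cInf_lower)
  also have "\<dots> = (integral\<^sup>L D (\<lambda>S. Zmat A S ** X ** Zmat A S)) \<bullet> X / (norm X)\<^sup>2"
    by (simp add: matrix_scalar_ac scalar_matrix_assoc[symmetric] power2_eq_square
        divide_inverse mult_ac)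
  finally show ?thesis
    using False by (simp add: contraction_rate_def pos_le_divide_eq)
qed simp

lemma one_le_contraction_rate:
  assumes sym: "transpose A = A" and X: "X \<in> sandwich_space A"
    and nonint: "\<not> integrable D (\<lambda>S. Zmat A S ** X ** Zmat A S)"
  shows "1 \<le> contraction_rate D A"
proof -
  have "X \<noteq> 0" using nonint by auto
  moreover have "(1 - contraction_rate D A) * (norm X)\<^sup>2 \<le> 0"
    using contraction_rate_bound[OF sym X, of D] nonint by (simp add: not_integrable_integral_eq)
  ultimately show ?thesis by (simp add: mult_le_0_iff)
qed

lemma expected_norm_sub_compression:
  assumes D: "prob_space D" and sym: "transpose A = A"
    and int: "integrable D (\<lambda>S. Zmat A S ** X ** Zmat A S)"
  shows "(\<integral>S. (norm (X - Zmat A S ** X ** Zmat A S))\<^sup>2 \<partial>D)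
           = (norm X)\<^sup>2 - (integral\<^sup>L D (\<lambda>S. Zmat A S ** X ** Zmat A S)) \<bullet> X"
proof -
  interpret prob_space D by (rule D)
  have "(\<integral>S. (norm (X - Zmat A S ** X ** Zmat A S))\<^sup>2 \<partial>D)
      = (\<integral>S. (norm X)\<^sup>2 - (Zmat A S ** X ** Zmat A S) \<bullet> X \<partial>D)"
    by (simp add: norm_sub_compression[OF Zmat_symmetric_idempotent[OF sym]])
  also have "\<dots> = (norm X)\<^sup>2 - (\<integral>S. (Zmat A S ** X ** Zmat A S) \<bullet> X \<partial>D)"
    using int by (subst Bochner_Integration.integral_diff) (auto simp: prob_space)
  finally show ?thesis using int by simp
qed

lemma expected_compression_contraction:
  assumes "prob_space D" "transpose A = A" "X \<in> sandwich_space A"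
    and "integrable D (\<lambda>S. Zmat A S ** X ** Zmat A S)"
  shows "(\<integral>S. (norm (X - Zmat A S ** X ** Zmat A S))\<^sup>2 \<partial>D)
           \<le> contraction_rate D A * (norm X)\<^sup>2"
  using contraction_rate_bound[OF assms(2,3), of D]
  by (simp add: expected_norm_sub_compression[OF assms(1,2,4)] algebra_simps)

lemma contraction_rate_nonneg:
  assumes "prob_space D" "transpose A = A" "X \<in> sandwich_space A" "X \<noteq> 0"
    and "integrable D (\<lambda>S. Zmat A S ** X ** Zmat A S)"
  shows "0 \<le> contraction_rate D A"
proof -
  have "0 \<le> (\<integral>S. (norm (X - Zmat A S ** X ** Zmat A S))\<^sup>2 \<partial>D)"
    by (intro Bochner_Integration.integral_nonneg) simp
  also have "\<dots> \<le> contraction_rate D A * (norm X)\<^sup>2"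
    using expected_compression_contraction assms(1-3,5) .
  finally show ?thesis using assms(4) by (simp add: zero_le_mult_iff)
qed

lemma expected_error_le_initial:
  assumes D: "prob_space D" and sym: "transpose A = A"
  shows "(\<integral>Ss. (norm (iter A X0 Ss k - pinv A))\<^sup>2 \<partial>PiM {..<k} (\<lambda>_. D))
           \<le> (norm (X0 - pinv A))\<^sup>2"
proof (cases "integrable (PiM {..<k} (\<lambda>_. D)) (\<lambda>Ss. (norm (iter A X0 Ss k - pinv A))\<^sup>2)")
  case True
  interpret prob_space "PiM {..<k} (\<lambda>_. D)"
    using D by (intro prob_space_PiM)
  show ?thesis using True norm_iter_minus_pinv_le[OF sym] by (intro integral_le_const) auto
qed (simp add: not_integrable_integral_eq)

lemma expected_error_contraction:
  fixes D :: "(real^'t^'n) measure" and A X0 :: "real^'n^'n"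
  assumes D: "prob_space D" and sym: "transpose A = A" and X0: "X0 \<in> sandwich_space A"
    and int: "\<And>X. X \<in> sandwich_space A \<Longrightarrow> integrable D (\<lambda>S. Zmat A S ** X ** Zmat A S)"
    and rate: "0 \<le> contraction_rate D A"
  shows "(\<integral>Ss. (norm (iter A X0 Ss k - pinv A))\<^sup>2 \<partial>PiM {..<k} (\<lambda>_. D))
           \<le> contraction_rate D A ^ k * (norm (X0 - pinv A))\<^sup>2"
proof -
  interpret prob_space D by (rule D)
  let ?g = "\<lambda>k Ss. (norm (iter A X0 Ss k - pinv A))\<^sup>2"
  show ?thesis
  proof (rule integral_PiM_iterated_contraction[where g = ?g])
    show "integrable (PiM {..<k} (\<lambda>_. D)) (?g k)" for k
    proof -
      interpret P: prob_space "PiM {..<k} (\<lambda>_. D)"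
        by (intro prob_space_PiM prob_space_axioms)
      have "(\<lambda>Ss. iter A X0 Ss k - pinv A) \<in> borel_measurable (PiM {..<k} (\<lambda>_. D))"
        using int by (intro borel_measurable_iter[OF sym X0] borel_measurable_integrable) auto
      then show ?thesis
        using norm_iter_minus_pinv_le[OF sym]
        by (intro P.integrable_const_bound[where B = "(norm (X0 - pinv A))\<^sup>2"]) auto
    qed
    show "(\<integral>y. ?g (Suc k) (x(k := y)) \<partial>D) \<le> contraction_rate D A * ?g k x" for k x
    proof -
      have "iter A X0 (x(k := y)) k = iter A X0 x k" for y
        by (rule iter_cong) simp
      then have "(\<integral>y. ?g (Suc k) (x(k := y)) \<partial>D)
          = (\<integral>y. (norm ((iter A X0 x k - pinv A)
                  - Zmat A y ** (iter A X0 x k - pinv A) ** Zmat A y))\<^sup>2 \<partial>D)"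
        by (simp add: step_minus_pinv[OF sym])
      also have "\<dots> \<le> contraction_rate D A * ?g k x"
        using iter_minus_pinv_in_sandwich_space[OF sym X0]
        by (intro expected_compression_contraction[OF D sym] int)
      finally show ?thesis .
    qed
  qed (use rate in simp_all)
qed

theorem theorem4:
  fixes A W :: "real^'n^'n" and D :: "(real^'t^'n) measure" and k :: nat
  assumes symA: "transpose A = A"
    and D: "prob_space D" "sets D = sets borel"
  defines "\<rho> \<equiv> 1 - Inf {(integral\<^sup>L D (\<lambda>S. Zmat A S ** R ** Zmat A S)) \<bullet> R | R Q.
                          R = A ** Q ** A \<and> (norm R)\<^sup>2 = 1}"
  shows "integral\<^sup>L (PiM {..<k} (\<lambda>_. D)) (\<lambda>Ss. (norm (iter A (A ** W ** A) Ss k - pinv A))\<^sup>2)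
           \<le> \<rho> ^ k * (norm (A ** W ** A - pinv A))\<^sup>2"
proof -
  have \<rho>: "\<rho> = contraction_rate D A" by (simp add: \<rho>_def contraction_rate_def)
  have X0: "A ** W ** A \<in> sandwich_space A" by (auto simp: sandwich_space_def)
  have initial: "integral\<^sup>L (PiM {..<k} (\<lambda>_. D)) (\<lambda>Ss. (norm (iter A (A ** W ** A) Ss k - pinv A))\<^sup>2)
      \<le> (norm (A ** W ** A - pinv A))\<^sup>2"
    by (rule expected_error_le_initial[OF D(1) symA])
  show ?thesis
  proof (cases "\<forall>X \<in> sandwich_space A. integrable D (\<lambda>S. Zmat A S ** X ** Zmat A S)")
    case False
    then have "1 \<le> \<rho>" unfolding \<rho> using one_le_contraction_rate[OF symA] by blast
    then have "(norm (A ** W ** A - pinv A))\<^sup>2 \<le> \<rho> ^ k * (norm (A ** W ** A - pinv A))\<^sup>2"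
      by (simp add: mult_le_cancel_right1 one_le_power)
    with initial show ?thesis by simp
  next
    case integrable: True
    show ?thesis
    proof (cases "A ** W ** A - pinv A = 0")
      case False
      have "A ** W ** A - pinv A \<in> sandwich_space A"
        using iter_minus_pinv_in_sandwich_space[OF symA X0, of _ 0] by simp
      then have "0 \<le> \<rho>"
        unfolding \<rho> using contraction_rate_nonneg[OF D(1) symA _ False] integrable by blast
      then show ?thesis
        unfolding \<rho> using expected_error_contraction[OF D(1) symA X0] integrable by blast
    qed (use initial in simp)
  qed
qed

end
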